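(* Let $f,g\in W^{1,\infty}_{0,1}(\mathbb R\setminus\{0\})$ and define $$K[f,g](\eta)=\int_{\mathbb R}e^{3i\eta\lambda^2/4}f\Big(\frac{\eta+\lambda}{2}\Big)g\Big(\frac{\eta-\lambda}{2}\Big)d\lambda .$$ Then for all $\eta\in\mathbb R\setminus\{0\}$, $$|K(f,g)(\eta)|\lesssim\frac{1}{|\eta|^{1/2}}\|f\|_{W^{1,\infty}_{0,1}(\mathbb R\setminus\{0\})}\|g\|_{W^{1,\infty}_{0,1}(\mathbb R\setminus\{0\})}.$$
   Context: $\langle\xi\rangle=(1+\xi^2)^{1/2}$; $\|v\|_{W^{1,\infty}_{0,1}(\Omega)}=\|v\|_{L^\infty(\Omega)}+\|\langle\xi\rangle\partial_\xi v\|_{L^\infty(\Omega)}$. The integral defining $K$ is understood as an (improper) oscillatory integral. *)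

theory Defs
  imports "HOL-Analysis.Analysis"
begin

definition jbr :: "real \<Rightarrow> real" where
  "jbr x = sqrt (1 + x\<^sup>2)"

text \<open>W01_bound f h A B: f lies in W^{1,infinity}_{0,1}(R minus 0), with weak derivative h
  (f locally absolutely continuous on each half-line with derivative h),
  sup |f| <= A and sup |<x> h x| <= B.  Then the norm of f is the infimum of A + B
  over all such data.\<close>
definition W01_bound :: "(real \<Rightarrow> complex) \<Rightarrow> (real \<Rightarrow> complex) \<Rightarrow> real \<Rightarrow> real \<Rightarrow> bool" where
  "W01_bound f h A B \<longleftrightarrow>
     (\<forall>x. x \<noteq> 0 \<longrightarrow> norm (f x) \<le> A) \<and>
     (\<forall>x. x \<noteq> 0 \<longrightarrow> jbr x * norm (h x) \<le> B) \<and>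
     (\<forall>a b. (0 < a \<and> a \<le> b) \<or> (a \<le> b \<and> b < 0) \<longrightarrow> (h has_integral (f b - f a)) {a..b})"

text \<open>Truncated integral defining K[f,g](eta); K itself is its limit as R tends to infinity.\<close>
definition Ktrunc :: "(real \<Rightarrow> complex) \<Rightarrow> (real \<Rightarrow> complex) \<Rightarrow> real \<Rightarrow> real \<Rightarrow> complex" where
  "Ktrunc f g \<eta> R = integral {-R..R}
     (\<lambda>l. exp (\<i> * of_real (3 * \<eta> * l\<^sup>2 / 4)) * f ((\<eta> + l) / 2) * g ((\<eta> - l) / 2))"

end

theory Submission
  imports Defs
begin

(* Reflecting lambda to -lambda reduces K to two integrals over [0, R] of
   e^{i phi(lambda)} f((eta + lambda)/2) g((eta - lambda)/2) with phi(lambda) = 3 eta lambda^2 / 4.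
   Up to the stationary-phase scale |eta|^(-1/2) the integrand is simply bounded by |f| |g|.
   Beyond it one integrates by parts, writing e^{i phi} as the derivative of e^{i phi} / (i phi')
   up to an O(1 / (|eta| lambda^2)) error; this gains the factor 1 / (|eta| lambda) and moves the
   derivative onto the product of f and g, which is only available away from lambda = |eta|, where
   one of the two arguments crosses the singularity at 0; that point is excised by an
   epsilon-argument.  Up to lambda = 2 |eta| the bounded derivatives contribute a logarithm
   ln (|eta|^(3/2)), which is O(|eta|^(1/2)); beyond 2 |eta| the weight <x> makes them O(1 / lambda),
   so the remaining tail is O(1 / (|eta| lambda)), which also gives convergence as R tends to
   infinity. *)

definition primitive_on :: "(real \<Rightarrow> complex) \<Rightarrow> (real \<Rightarrow> complex) \<Rightarrow> real set \<Rightarrow> bool" where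
  "primitive_on U u S \<longleftrightarrow> (\<forall>s t. s \<le> t \<longrightarrow> {s..t} \<subseteq> S \<longrightarrow> (u has_integral (U t - U s)) {s..t})"

lemma primitive_onD:
  "primitive_on U u S \<Longrightarrow> s \<le> t \<Longrightarrow> {s..t} \<subseteq> S \<Longrightarrow> (u has_integral (U t - U s)) {s..t}"
  unfolding primitive_on_def by blast

lemma primitive_on_subset: "primitive_on U u T \<Longrightarrow> S \<subseteq> T \<Longrightarrow> primitive_on U u S"
  unfolding primitive_on_def by (meson order_trans)

lemma has_vector_derivative_imp_primitive_on:
  assumes "\<And>t. t \<in> S \<Longrightarrow> (U has_vector_derivative u t) (at t)"
  shows "primitive_on U u S"
  unfolding primitive_on_def
proof (intro allI impI)
  fix s t assume st: "s \<le> t" "{s..t} \<subseteq> S"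
  show "(u has_integral U t - U s) {s..t}"
  proof (rule fundamental_theorem_of_calculus[OF st(1)])
    fix x assume "x \<in> {s..t}"
    then show "(U has_vector_derivative u x) (at x within {s..t})"
      using assms st(2) by (blast intro: has_vector_derivative_at_within)
  qed
qed

lemma primitive_on_compose_affine:
  assumes U: "primitive_on U u S" and "m \<noteq> 0"
  shows "primitive_on (\<lambda>l. U (m * l + c)) (\<lambda>l. m * u (m * l + c)) ((\<lambda>l. m * l + c) -` S)"
  unfolding primitive_on_def
proof (intro allI impI)
  fix s t assume st: "s \<le> t" and sub: "{s..t} \<subseteq> (\<lambda>l. m * l + c) -` S"
  define a where "a = m * s + c"
  define b where "b = m * t + c"
  have img: "(\<lambda>l. m * l + c) ` {s..t} \<subseteq> S" using sub by (simp add: image_subset_iff_subset_vimage)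
  have inverse_image: "(\<lambda>x. (1 / m) *\<^sub>R x + - ((1 / m) *\<^sub>R c)) ` (\<lambda>l. m * l + c) ` {s..t} = {s..t}"
  proof -
    have "(\<lambda>x. (1 / m) *\<^sub>R x + - ((1 / m) *\<^sub>R c)) \<circ> (\<lambda>l. m * l + c) = id"
      using \<open>m \<noteq> 0\<close> by (auto simp: field_simps)
    then show ?thesis by (simp add: image_comp)
  qed
  have affinity: "((\<lambda>l. m * u (m * l + c)) has_integral of_real (m / \<bar>m\<bar>) * I) {s..t}"
    if "(u has_integral I) ((\<lambda>l. m * l + c) ` {s..t})" "(\<lambda>l. m * l + c) ` {s..t} = cbox p q" for I p q
    using has_integral_mult_right[OF has_integral_affinity[OF that(1)[unfolded that(2)] \<open>m \<noteq> 0\<close>, of c], of m]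
      inverse_image[unfolded that(2)]
    by (simp add: scaleR_conv_of_real)
  consider "0 < m" | "m < 0" using \<open>m \<noteq> 0\<close> by linarith
  then show "((\<lambda>l. m * u (m * l + c)) has_integral (U b - U a)) {s..t}"
  proof cases
    case 1
    have J: "(\<lambda>l. m * l + c) ` {s..t} = cbox a b"
      using image_affinity_cbox[of m c s t] st 1 unfolding a_def b_def by simp
    have "a \<le> b" using st 1 unfolding a_def b_def by simp
    then have "(u has_integral (U b - U a)) ((\<lambda>l. m * l + c) ` {s..t})"
      using img unfolding J cbox_interval by (rule primitive_onD[OF U])
    from affinity[OF this J] show ?thesis using 1 by simp
  next
    case 2
    have J: "(\<lambda>l. m * l + c) ` {s..t} = cbox b a"
      using image_affinity_cbox[of m c s t] st 2 unfolding a_def b_def by simp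
    have "b \<le> a" using st 2 unfolding a_def b_def by (simp add: mult_left_mono_neg)
    then have "(u has_integral (U a - U b)) ((\<lambda>l. m * l + c) ` {s..t})"
      using img unfolding J cbox_interval by (rule primitive_onD[OF U])
    from affinity[OF this J] show ?thesis using 2 by (simp add: right_diff_distrib)
  qed
qed

lemma primitive_on_norm_diff_le:
  assumes "primitive_on U u {a..b}" "\<And>t. t \<in> {a..b} \<Longrightarrow> norm (u t) \<le> K"
    and "a \<le> s" "s \<le> t" "t \<le> b"
  shows "norm (U t - U s) \<le> K * (t - s)"
proof -
  have "0 \<le> K" using assms(2)[of s] assms(3-5) by (auto intro: order_trans[OF norm_ge_zero])
  then show ?thesis
    using has_integral_bound_real[OF _ _ primitive_onD[OF assms(1)], of K "{}" s t] assms(2-5) by auto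
qed

lemma primitive_on_continuous_on:
  assumes "primitive_on U u {a..b}" "bounded (u ` {a..b})"
  shows "continuous_on {a..b} U"
proof (cases "a \<le> b")
  case True
  obtain K where K: "\<And>t. t \<in> {a..b} \<Longrightarrow> norm (u t) \<le> K"
    using assms(2) unfolding bounded_iff by blast
  have "K-lipschitz_on {a..b} U"
  proof (rule lipschitz_onI)
    fix s t assume "s \<in> {a..b}" "t \<in> {a..b}"
    then show "dist (U s) (U t) \<le> K * dist s t"
    proof (cases "s \<le> t")
      case True
      then show ?thesis using primitive_on_norm_diff_le[OF assms(1) K, of s t] \<open>s \<in> {a..b}\<close> \<open>t \<in> {a..b}\<close>
        by (simp add: dist_norm norm_minus_commute)
    next
      case False
      then show ?thesis using primitive_on_norm_diff_le[OF assms(1) K, of t s] \<open>s \<in> {a..b}\<close> \<open>t \<in> {a..b}\<close>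
        by (simp add: dist_norm)
    qed
  next
    show "0 \<le> K" using K[of a] True by (auto intro: order_trans[OF norm_ge_zero])
  qed
  then show ?thesis by (rule lipschitz_on_continuous_on)
qed simp

lemma interval_additive_quadratic_bound_eq_0:
  fixes D :: "real \<Rightarrow> real \<Rightarrow> 'a::real_normed_vector"
  assumes additive: "\<And>s r t. a \<le> s \<Longrightarrow> s \<le> r \<Longrightarrow> r \<le> t \<Longrightarrow> t \<le> b \<Longrightarrow> D s t = D s r + D r t"
    and quadratic: "\<And>s t. a \<le> s \<Longrightarrow> s \<le> t \<Longrightarrow> t \<le> b \<Longrightarrow> norm (D s t) \<le> C * (t - s)\<^sup>2"
    and "a \<le> s" "s \<le> t" "t \<le> b"
  shows "D s t = 0"
proof -
  have bisected: "norm (D s t) \<le> C * (t - s)\<^sup>2 / 2 ^ n" if "a \<le> s" "s \<le> t" "t \<le> b" for n s t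
    using that
  proof (induction n arbitrary: s t)
    case 0
    then show ?case using quadratic by simp
  next
    case (Suc n)
    define m where "m = (s + t) / 2"
    have "m - s = (t - s) / 2" "t - m = (t - s) / 2" "s \<le> m" "m \<le> t"
      using Suc.prems unfolding m_def by (simp_all add: field_simps)
    have "norm (D s t) \<le> norm (D s m) + norm (D m t)"
      using additive[of s m t] Suc.prems \<open>s \<le> m\<close> \<open>m \<le> t\<close> by (simp add: norm_triangle_ineq)
    also have "\<dots> \<le> C * (m - s)\<^sup>2 / 2 ^ n + C * (t - m)\<^sup>2 / 2 ^ n"
      using Suc.IH[of s m] Suc.IH[of m t] Suc.prems \<open>s \<le> m\<close> \<open>m \<le> t\<close> by (intro add_mono) auto
    also have "\<dots> = C * (t - s)\<^sup>2 / 2 ^ Suc n"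
      unfolding \<open>m - s = (t - s) / 2\<close> \<open>t - m = (t - s) / 2\<close> by (simp add: field_simps power2_eq_square)
    finally show ?case .
  qed
  have "(\<lambda>n. C * (t - s)\<^sup>2 / 2 ^ n) \<longlonglongrightarrow> 0"
    by (rule LIMSEQ_divide_realpow_zero) simp
  then have "norm (D s t) \<le> 0"
    by (rule LIMSEQ_le_const) (use bisected[OF assms(3-5)] in simp)
  then show ?thesis by simp
qed

lemma integrable_on_mult_continuous:
  fixes u V :: "real \<Rightarrow> complex"
  assumes "u integrable_on {s..t}" "bounded (u ` {s..t})" "continuous_on {s..t} V"
  shows "(\<lambda>r. u r * V r) integrable_on {s..t}"
proof -
  obtain K M where K: "\<And>r. r \<in> {s..t} \<Longrightarrow> norm (u r) \<le> K" and M: "\<And>r. r \<in> {s..t} \<Longrightarrow> norm (V r) \<le> M"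
    using assms(2) compact_imp_bounded[OF compact_continuous_image[OF assms(3)]]
    unfolding bounded_iff by (meson compact_Icc image_eqI)
  show ?thesis
  proof (rule measurable_bounded_by_integrable_imp_integrable)
    show "(\<lambda>r. u r * V r) \<in> borel_measurable (lebesgue_on {s..t})"
      using integrable_imp_measurable[OF assms(1)] continuous_imp_measurable_on_sets_lebesgue[OF assms(3)]
      by (rule borel_measurable_times) simp_all
    show "norm (u r * V r) \<le> K * M" if "r \<in> {s..t}" for r
      unfolding norm_mult using K[OF that] M[OF that] by (intro mult_mono) (auto intro: order_trans[OF norm_ge_zero])
  qed (auto intro: integrable_on_const)
qed

lemma primitive_on_mult_integrable:
  assumes U: "primitive_on U u {a..b}" and V: "primitive_on V v {a..b}"
    and bu: "bounded (u ` {a..b})" and bv: "bounded (v ` {a..b})"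
  shows "(\<lambda>r. u r * V r) integrable_on {a..b}" "(\<lambda>r. U r * v r) integrable_on {a..b}"
proof -
  have "u integrable_on {a..b} \<and> v integrable_on {a..b}"
  proof (cases "a \<le> b")
    case True
    then show ?thesis using primitive_onD[OF U] primitive_onD[OF V] by blast
  qed (simp add: integrable_on_empty)
  moreover have "continuous_on {a..b} U" "continuous_on {a..b} V"
    using primitive_on_continuous_on U V bu bv by blast+
  ultimately have "(\<lambda>r. u r * V r) integrable_on {a..b}" "(\<lambda>r. v r * U r) integrable_on {a..b}"
    using integrable_on_mult_continuous bu bv by blast+
  then show "(\<lambda>r. u r * V r) integrable_on {a..b}" "(\<lambda>r. U r * v r) integrable_on {a..b}"
    by (simp_all add: mult.commute)
qed

lemma primitive_on_mult_error_le:
  assumes U: "primitive_on U u {s..t}" and V: "primitive_on V v {s..t}" and "s \<le> t"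
    and K: "\<And>r. r \<in> {s..t} \<Longrightarrow> norm (u r) \<le> K \<and> norm (v r) \<le> K"
  shows "norm (U t * V t - U s * V s - integral {s..t} (\<lambda>r. u r * V r + U r * v r)) \<le> 2 * K * K * (t - s)\<^sup>2"
proof -
  have K0: "0 \<le> K" using K[of s] \<open>s \<le> t\<close> by (auto intro: order_trans[OF norm_ge_zero])
  have "bounded (u ` {s..t})" "bounded (v ` {s..t})"
    using K unfolding bounded_iff by blast+
  note uV = primitive_on_mult_integrable(1)[OF U V this]
    and Uv = primitive_on_mult_integrable(2)[OF U V this]
  have Lu: "norm (U t - U r) \<le> K * (t - s)" and Lv: "norm (V r - V s) \<le> K * (t - s)"
    if r: "r \<in> {s..t}" for r
  proof -
    have "norm (U t - U r) \<le> K * (t - r)" "norm (V r - V s) \<le> K * (r - s)"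
      using primitive_on_norm_diff_le[OF U, of K r t] primitive_on_norm_diff_le[OF V, of K s r] K r by auto
    moreover have "K * (t - r) \<le> K * (t - s)" "K * (r - s) \<le> K * (t - s)"
      using K0 r by (simp_all add: mult_left_mono)
    ultimately show "norm (U t - U r) \<le> K * (t - s)" "norm (V r - V s) \<le> K * (t - s)"
      by linarith+
  qed
  \<comment> \<open>\<open>U t V t - U s V s = (U t - U s) V s + U t (V t - V s)\<close>, and each term differs from the
    matching part of the integral by \<open>O((t - s)\<^sup>2)\<close>.\<close>
  define E1 where "E1 = (U t - U s) * V s - integral {s..t} (\<lambda>r. u r * V r)"
  define E2 where "E2 = U t * (V t - V s) - integral {s..t} (\<lambda>r. U r * v r)"
  have hE1: "((\<lambda>r. u r * V s - u r * V r) has_integral E1) {s..t}"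
    unfolding E1_def using primitive_onD[OF U \<open>s \<le> t\<close>]
    by (intro has_integral_diff has_integral_mult_left integrable_integral uV) auto
  have hE2: "((\<lambda>r. U t * v r - U r * v r) has_integral E2) {s..t}"
    unfolding E2_def using primitive_onD[OF V \<open>s \<le> t\<close>]
    by (intro has_integral_diff has_integral_mult_right integrable_integral Uv) auto
  have "norm (u r * V s - u r * V r) \<le> K * (K * (t - s))" if r: "r \<in> {s..t} - {}" for r
  proof -
    have "norm (u r * V s - u r * V r) = norm (u r) * norm (V r - V s)"
      by (metis norm_mult right_diff_distrib norm_minus_commute)
    also have "\<dots> \<le> K * (K * (t - s))" using K[of r] Lv[of r] r K0 by (intro mult_mono) auto
    finally show ?thesis .
  qed
  from has_integral_bound_real[OF _ finite.emptyI hE1 this] have "norm E1 \<le> K * (K * (t - s)) * (t - s)"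
    using K0 \<open>s \<le> t\<close> by simp
  moreover have "norm (U t * v r - U r * v r) \<le> K * (K * (t - s))" if r: "r \<in> {s..t} - {}" for r
  proof -
    have "norm (U t * v r - U r * v r) = norm (U t - U r) * norm (v r)"
      by (metis norm_mult left_diff_distrib)
    also have "\<dots> \<le> K * (t - s) * K" using K[of r] Lu[of r] r K0 by (intro mult_mono) auto
    finally show ?thesis by (simp add: mult_ac)
  qed
  from has_integral_bound_real[OF _ finite.emptyI hE2 this] have "norm E2 \<le> K * (K * (t - s)) * (t - s)"
    using K0 \<open>s \<le> t\<close> by simp
  moreover have "U t * V t - U s * V s - integral {s..t} (\<lambda>r. u r * V r + U r * v r) = E1 + E2"
    using integral_add[OF uV Uv] unfolding E1_def E2_def by (simp add: algebra_simps)
  ultimately show ?thesis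
    using norm_triangle_ineq[of E1 E2] by (simp add: power2_eq_square)
qed

lemma primitive_on_mult:
  assumes U: "primitive_on U u {a..b}" and V: "primitive_on V v {a..b}"
    and bu: "bounded (u ` {a..b})" and bv: "bounded (v ` {a..b})"
  shows "primitive_on (\<lambda>t. U t * V t) (\<lambda>t. u t * V t + U t * v t) {a..b}"
proof -
  obtain K where K: "\<And>t. t \<in> {a..b} \<Longrightarrow> norm (u t) \<le> K \<and> norm (v t) \<le> K"
    using bounded_Un[THEN iffD2, OF conjI[OF bu bv]] unfolding bounded_iff by blast
  define w where "w t = u t * V t + U t * v t" for t
  have w: "w integrable_on {s..t}" if "{s..t} \<subseteq> {a..b}" for s t
  proof -
    have "primitive_on U u {s..t}" "primitive_on V v {s..t}"
      using primitive_on_subset[OF U that] primitive_on_subset[OF V that] .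
    moreover have "bounded (u ` {s..t})" "bounded (v ` {s..t})"
      using bounded_subset[OF bu] bounded_subset[OF bv] that by (meson image_mono)+
    ultimately show ?thesis
      unfolding w_def by (intro integrable_add primitive_on_mult_integrable)
  qed
  define D where "D s t = U t * V t - U s * V s - integral {s..t} w" for s t
  have D0: "D s t = 0" if "a \<le> s" "s \<le> t" "t \<le> b" for s t
  proof (rule interval_additive_quadratic_bound_eq_0[where C = "2 * K * K"])
    fix s r t assume "a \<le> s" "s \<le> r" "r \<le> t" "t \<le> b"
    then have "integral {s..r} w + integral {r..t} w = integral {s..t} w"
      using w by (intro Henstock_Kurzweil_Integration.integral_combine) auto
    then show "D s t = D s r + D r t" unfolding D_def by (simp add: algebra_simps)
  next
    fix s t assume st: "a \<le> s" "s \<le> t" "t \<le> b"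
    then have "{s..t} \<subseteq> {a..b}" by auto
    then show "norm (D s t) \<le> 2 * K * K * (t - s)\<^sup>2"
      unfolding D_def w_def using K st
      by (intro primitive_on_mult_error_le primitive_on_subset[OF U] primitive_on_subset[OF V]) auto
  qed (use that in auto)
  show ?thesis
    unfolding primitive_on_def
  proof (intro allI impI)
    fix s t assume "s \<le> t" "{s..t} \<subseteq> {a..b}"
    then have "integral {s..t} w = U t * V t - U s * V s"
      using D0[of s t] unfolding D_def by auto
    then show "((\<lambda>t. u t * V t + U t * v t) has_integral (U t * V t - U s * V s)) {s..t}"
      using integrable_integral[OF w[OF \<open>{s..t} \<subseteq> {a..b}\<close>]] unfolding w_def by simp
  qed
qed

lemma has_integral_inverse:
  fixes x y :: real
  assumes "0 < x" "x \<le> y"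
  shows "((\<lambda>l. 1 / l) has_integral (ln y - ln x)) {x..y}"
proof (rule fundamental_theorem_of_calculus[OF assms(2)])
  fix l assume "l \<in> {x..y}"
  then have "0 < l" using assms by auto
  then show "(ln has_vector_derivative 1 / l) (at l within {x..y})"
    by (auto intro!: derivative_eq_intros simp: has_real_derivative_iff_has_vector_derivative[symmetric])
qed

lemma has_integral_inverse_square:
  fixes x y :: real
  assumes "0 < x" "x \<le> y"
  shows "((\<lambda>l. 1 / l\<^sup>2) has_integral (1 / x - 1 / y)) {x..y}"
proof -
  have "((\<lambda>l. 1 / l\<^sup>2) has_integral ((- 1 / y) - (- 1 / x))) {x..y}"
  proof (rule fundamental_theorem_of_calculus[OF assms(2)])
    fix l assume "l \<in> {x..y}"
    then have "0 < l" using assms by auto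
    then show "((\<lambda>l. - 1 / l) has_vector_derivative 1 / l\<^sup>2) (at l within {x..y})"
      by (auto intro!: derivative_eq_intros simp: power2_eq_square has_real_derivative_iff_has_vector_derivative[symmetric])
  qed
  then show ?thesis by simp
qed

definition chirp :: "real \<Rightarrow> real \<Rightarrow> complex" where
  "chirp \<eta> l = exp (\<i> * of_real (3 * \<eta> * l\<^sup>2 / 4))"

lemma norm_chirp [simp]: "norm (chirp \<eta> l) = 1"
  unfolding chirp_def by simp

lemma continuous_on_chirp [continuous_intros]: "continuous_on S (chirp \<eta>)"
  unfolding chirp_def by (intro continuous_intros) auto

definition chirp_quotient :: "real \<Rightarrow> real \<Rightarrow> complex" where
  "chirp_quotient \<eta> l = chirp \<eta> l / (\<i> * of_real (3 * \<eta> * l / 2))"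

lemma norm_chirp_quotient: "0 < l \<Longrightarrow> norm (chirp_quotient \<eta> l) = 2 / (3 * \<bar>\<eta>\<bar> * l)"
  unfolding chirp_quotient_def by (simp add: norm_divide norm_mult abs_mult)

lemma chirp_quotient_has_vector_derivative:
  fixes \<eta> l :: real
  assumes "\<eta> \<noteq> 0" "l \<noteq> 0"
  shows "(chirp_quotient \<eta> has_vector_derivative chirp \<eta> l * (1 + 2 * \<i> / of_real (3 * \<eta> * l\<^sup>2))) (at l)"
proof -
  define c :: complex where "c = of_real (3 * \<eta> / 4)"
  have "c \<noteq> 0" using assms unfolding c_def by simp
  have "((\<lambda>z. exp (\<i> * c * z\<^sup>2) / (2 * \<i> * c * z)) has_field_derivative
      exp (\<i> * c * (of_real l)\<^sup>2) * (1 + \<i> / (2 * c * (of_real l)\<^sup>2))) (at (of_real l))"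
    using assms \<open>c \<noteq> 0\<close>
    by (auto intro!: derivative_eq_intros simp: power2_eq_square field_simps)
  from has_vector_derivative_real_field[OF this]
  show ?thesis
    unfolding c_def chirp_def chirp_quotient_def[abs_def] using assms by (simp add: field_simps power2_eq_square)
qed

text \<open>Up to the integrable error \<open>2 \<i> chirp \<eta> l / (3 \<eta> l\<^sup>2)\<close>, \<open>chirp \<eta>\<close> is the derivative of
  \<open>chirp_quotient \<eta>\<close>, so integrating by parts moves the derivative onto \<open>F\<close>.\<close>

lemma chirp_mult_integral_by_parts:
  fixes F F' :: "real \<Rightarrow> complex"
  assumes F: "primitive_on F F' {x..y}" "bounded (F' ` {x..y})" and "0 < x" "x \<le> y" "\<eta> \<noteq> 0"
  defines "R \<equiv> \<lambda>l. 2 * \<i> / of_real (3 * \<eta> * l\<^sup>2) * chirp \<eta> l * F l + chirp_quotient \<eta> l * F' l"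
  shows "R integrable_on {x..y}"
    and "integral {x..y} (\<lambda>l. chirp \<eta> l * F l)
      = chirp_quotient \<eta> y * F y - chirp_quotient \<eta> x * F x - integral {x..y} R"
proof -
  define \<Psi>' where "\<Psi>' l = chirp \<eta> l * (1 + 2 * \<i> / of_real (3 * \<eta> * l\<^sup>2))" for l
  have "primitive_on (chirp_quotient \<eta>) \<Psi>' {x..y}"
    unfolding \<Psi>'_def using \<open>0 < x\<close> \<open>\<eta> \<noteq> 0\<close>
    by (intro has_vector_derivative_imp_primitive_on chirp_quotient_has_vector_derivative) auto
  moreover have "continuous_on {x..y} \<Psi>'"
    unfolding \<Psi>'_def using \<open>0 < x\<close> \<open>\<eta> \<noteq> 0\<close> by (intro continuous_intros) auto
  then have "bounded (\<Psi>' ` {x..y})" by (intro compact_imp_bounded compact_continuous_image) auto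
  ultimately have "primitive_on (\<lambda>l. chirp_quotient \<eta> l * F l) (\<lambda>l. \<Psi>' l * F l + chirp_quotient \<eta> l * F' l) {x..y}"
    using F by (intro primitive_on_mult)
  then have parts: "((\<lambda>l. \<Psi>' l * F l + chirp_quotient \<eta> l * F' l) has_integral
      (chirp_quotient \<eta> y * F y - chirp_quotient \<eta> x * F x)) {x..y}"
    using primitive_onD \<open>x \<le> y\<close> by blast
  have "continuous_on {x..y} F" by (rule primitive_on_continuous_on[OF F])
  then have "(\<lambda>l. chirp \<eta> l * F l) integrable_on {x..y}"
    by (intro integrable_continuous_interval continuous_intros)
  from has_integral_diff[OF parts integrable_integral[OF this]]
  have "(R has_integral (chirp_quotient \<eta> y * F y - chirp_quotient \<eta> x * F x
      - integral {x..y} (\<lambda>l. chirp \<eta> l * F l))) {x..y}"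
    unfolding R_def \<Psi>'_def by (simp add: algebra_simps)
  then show "R integrable_on {x..y}"
    and "integral {x..y} (\<lambda>l. chirp \<eta> l * F l)
      = chirp_quotient \<eta> y * F y - chirp_quotient \<eta> x * F x - integral {x..y} R"
    by (auto simp: integral_unique)
qed

lemma norm_integral_chirp_mult_le:
  fixes F F' :: "real \<Rightarrow> complex"
  assumes F: "primitive_on F F' {x..y}" "bounded (F' ` {x..y})" and "0 < x" "x \<le> y" "\<eta> \<noteq> 0"
    and M: "\<And>l. l \<in> {x..y} \<Longrightarrow> norm (F l) \<le> M"
    and Q: "Q integrable_on {x..y}" "\<And>l. l \<in> {x..y} \<Longrightarrow> norm (F' l) / l \<le> Q l"
  shows "norm (integral {x..y} (\<lambda>l. chirp \<eta> l * F l)) \<le> 2 * M / (\<bar>\<eta>\<bar> * x) + 2 / (3 * \<bar>\<eta>\<bar>) * integral {x..y} Q"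
proof -
  define R where "R l = 2 * \<i> / of_real (3 * \<eta> * l\<^sup>2) * chirp \<eta> l * F l + chirp_quotient \<eta> l * F' l" for l
  note by_parts = chirp_mult_integral_by_parts[OF F \<open>0 < x\<close> \<open>x \<le> y\<close> \<open>\<eta> \<noteq> 0\<close>, folded R_def]
  have l_pos: "0 < l" if "l \<in> {x..y}" for l using that \<open>0 < x\<close> by auto
  have "0 \<le> M" using M[of x] \<open>x \<le> y\<close> by (auto intro: order_trans[OF norm_ge_zero])
  have boundary: "norm (chirp_quotient \<eta> l * F l) \<le> 2 / (3 * \<bar>\<eta>\<bar>) * (M / x)" if "l \<in> {x..y}" for l
  proof -
    have "norm (chirp_quotient \<eta> l * F l) \<le> 2 / (3 * \<bar>\<eta>\<bar> * l) * M"
      unfolding norm_mult norm_chirp_quotient[OF l_pos[OF that]] using M[OF that] l_pos[OF that]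
      by (intro mult_left_mono) auto
    also have "\<dots> \<le> 2 / (3 * \<bar>\<eta>\<bar>) * (M / x)"
      using that \<open>0 \<le> M\<close> \<open>0 < x\<close> \<open>\<eta> \<noteq> 0\<close> by (auto simp: field_simps intro!: mult_left_mono)
    finally show ?thesis .
  qed
  have norm_R: "norm (R l) \<le> 2 / (3 * \<bar>\<eta>\<bar>) * (Q l + M * (1 / l\<^sup>2))" if "l \<in> {x..y}" for l
  proof -
    have "norm (R l) \<le> norm (2 * \<i> / of_real (3 * \<eta> * l\<^sup>2) * chirp \<eta> l * F l) + norm (chirp_quotient \<eta> l * F' l)"
      unfolding R_def by (rule norm_triangle_ineq)
    also have "\<dots> = 2 / (3 * \<bar>\<eta>\<bar> * l\<^sup>2) * norm (F l) + 2 / (3 * \<bar>\<eta>\<bar> * l) * norm (F' l)"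
      using l_pos[OF that] by (simp add: norm_mult norm_divide norm_power norm_chirp_quotient abs_mult)
    also have "\<dots> \<le> 2 / (3 * \<bar>\<eta>\<bar> * l\<^sup>2) * M + 2 / (3 * \<bar>\<eta>\<bar> * l) * norm (F' l)"
      using M[OF that] by (intro add_right_mono mult_left_mono) auto
    also have "\<dots> = 2 / (3 * \<bar>\<eta>\<bar>) * (M * (1 / l\<^sup>2) + norm (F' l) / l)"
      using l_pos[OF that] \<open>\<eta> \<noteq> 0\<close> by (simp add: field_simps power2_eq_square)
    also have "\<dots> \<le> 2 / (3 * \<bar>\<eta>\<bar>) * (Q l + M * (1 / l\<^sup>2))"
      using Q(2)[OF that] by (intro mult_left_mono) auto
    finally show ?thesis .
  qed
  have majorant: "((\<lambda>l. 2 / (3 * \<bar>\<eta>\<bar>) * (Q l + M * (1 / l\<^sup>2))) has_integral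
      2 / (3 * \<bar>\<eta>\<bar>) * (integral {x..y} Q + M * (1 / x - 1 / y))) {x..y}"
    by (intro has_integral_mult_right has_integral_add integrable_integral Q
        has_integral_inverse_square \<open>0 < x\<close> \<open>x \<le> y\<close>)
  have "norm (integral {x..y} R) \<le> 2 / (3 * \<bar>\<eta>\<bar>) * (integral {x..y} Q + M * (1 / x - 1 / y))"
    using integral_norm_bound_integral[OF by_parts(1) has_integral_integrable[OF majorant] norm_R]
    unfolding integral_unique[OF majorant] .
  also have "\<dots> \<le> 2 / (3 * \<bar>\<eta>\<bar>) * (integral {x..y} Q + M / x)"
    using \<open>0 \<le> M\<close> \<open>0 < x\<close> \<open>x \<le> y\<close> by (intro mult_left_mono add_left_mono) (auto simp: field_simps)
  finally have "norm (integral {x..y} R) \<le> 2 / (3 * \<bar>\<eta>\<bar>) * (integral {x..y} Q + M / x)" .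
  moreover have "norm (chirp_quotient \<eta> x * F x) \<le> 2 / (3 * \<bar>\<eta>\<bar>) * (M / x)"
    and "norm (chirp_quotient \<eta> y * F y) \<le> 2 / (3 * \<bar>\<eta>\<bar>) * (M / x)"
    using boundary \<open>x \<le> y\<close> by auto
  ultimately have "norm (integral {x..y} (\<lambda>l. chirp \<eta> l * F l))
      \<le> 2 / (3 * \<bar>\<eta>\<bar>) * (M / x) + 2 / (3 * \<bar>\<eta>\<bar>) * (M / x) + 2 / (3 * \<bar>\<eta>\<bar>) * (integral {x..y} Q + M / x)"
    unfolding by_parts(2)
    using norm_triangle_ineq4[of "chirp_quotient \<eta> y * F y - chirp_quotient \<eta> x * F x" "integral {x..y} R"]
      norm_triangle_ineq4[of "chirp_quotient \<eta> y * F y" "chirp_quotient \<eta> x * F x"]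
    by linarith
  also have "\<dots> = 2 * M / (\<bar>\<eta>\<bar> * x) + 2 / (3 * \<bar>\<eta>\<bar>) * integral {x..y} Q"
    using \<open>\<eta> \<noteq> 0\<close> \<open>0 < x\<close> by (simp add: field_simps)
  finally show ?thesis .
qed

lemma norm_integral_le_excising_point:
  fixes \<phi> :: "real \<Rightarrow> 'a::banach"
  assumes \<phi>: "\<phi> integrable_on {x..y}"
    and short: "\<And>s t. x \<le> s \<Longrightarrow> s \<le> t \<Longrightarrow> t \<le> y \<Longrightarrow> norm (integral {s..t} \<phi>) \<le> M * (t - s)"
    and Q: "Q integrable_on {x..y}" and Q_nonneg: "\<And>l. l \<in> {x..y} \<Longrightarrow> 0 \<le> Q l" and "0 \<le> \<beta>"
    and away: "\<And>s t. x \<le> s \<Longrightarrow> s \<le> t \<Longrightarrow> t \<le> y \<Longrightarrow> p \<notin> {s..t} \<Longrightarrow>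
      norm (integral {s..t} \<phi>) \<le> \<beta> + integral {s..t} Q"
    and "x \<le> y"
  shows "norm (integral {x..y} \<phi>) \<le> 2 * \<beta> + integral {x..y} Q"
proof (rule field_le_epsilon)
  fix e :: real assume "0 < e"
  define \<epsilon> where "\<epsilon> = e / (2 * (\<bar>M\<bar> + 1))"
  have "0 < \<epsilon>" using \<open>0 < e\<close> unfolding \<epsilon>_def by simp
  have "2 * \<epsilon> * \<bar>M\<bar> \<le> e" using \<open>0 < e\<close> unfolding \<epsilon>_def by (simp add: field_simps)
  define a where "a = min y (max x (p - \<epsilon>))"
  define b where "b = max a (min y (p + \<epsilon>))"
  have ab: "x \<le> a" "a \<le> b" "b \<le> y" "b - a \<le> 2 * \<epsilon>"
    using \<open>x \<le> y\<close> \<open>0 < \<epsilon>\<close> unfolding a_def b_def by auto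
  have left: "norm (integral {x..a} \<phi>) \<le> \<beta> + integral {x..a} Q"
  proof (cases "a = x")
    case False
    then have "a < p" using \<open>0 < \<epsilon>\<close> \<open>x \<le> y\<close> unfolding a_def by (auto simp: min_def max_def split: if_splits)
    then show ?thesis using ab by (intro away) auto
  qed (simp add: \<open>0 \<le> \<beta>\<close>)
  have right: "norm (integral {b..y} \<phi>) \<le> \<beta> + integral {b..y} Q"
  proof (cases "b = y")
    case False
    then have "p < b" using \<open>0 < \<epsilon>\<close> \<open>x \<le> y\<close> unfolding a_def b_def by (auto simp: min_def max_def split: if_splits)
    then show ?thesis using ab by (intro away) auto
  qed (simp add: \<open>0 \<le> \<beta>\<close>)
  have "norm (integral {a..b} \<phi>) \<le> \<bar>M\<bar> * (2 * \<epsilon>)"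
    using short[of a b] ab abs_ge_self[of M] by (smt (verit) mult_left_mono mult_right_mono)
  also have "\<dots> \<le> e" using \<open>2 * \<epsilon> * \<bar>M\<bar> \<le> e\<close> by (simp add: mult_ac)
  finally have middle: "norm (integral {a..b} \<phi>) \<le> e" .
  have split: "integral {x..y} f = integral {x..a} f + integral {a..b} f + integral {b..y} f"
    if "f integrable_on {x..y}" for f :: "real \<Rightarrow> 'b::banach"
    using ab that integrable_subinterval_real[OF that, of a y]
    by (simp add: Henstock_Kurzweil_Integration.integral_combine add.assoc)
  have "0 \<le> integral {a..b} Q"
    using ab Q_nonneg by (intro integral_nonneg integrable_subinterval_real[OF Q]) auto
  then have "integral {x..a} Q + integral {b..y} Q \<le> integral {x..y} Q"
    unfolding split[OF Q] by simp
  moreover have "norm (integral {x..y} \<phi>)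
      \<le> norm (integral {x..a} \<phi>) + norm (integral {a..b} \<phi>) + norm (integral {b..y} \<phi>)"
    unfolding split[OF \<phi>] by (intro norm_triangle_le add_mono norm_triangle_ineq order_refl)
  ultimately show "norm (integral {x..y} \<phi>) \<le> 2 * \<beta> + integral {x..y} Q + e"
    using left middle right by linarith
qed

lemma norm_integral_le_split:
  fixes \<phi> :: "real \<Rightarrow> 'a::banach"
  assumes \<phi>: "\<phi> integrable_on {x..y}" and "x \<le> y" "x \<le> p"
    and left: "\<And>t. x \<le> t \<Longrightarrow> t \<le> p \<Longrightarrow> norm (integral {x..t} \<phi>) \<le> C1"
    and right: "\<And>t. p \<le> t \<Longrightarrow> norm (integral {p..t} \<phi>) \<le> C2"
  shows "norm (integral {x..y} \<phi>) \<le> C1 + C2"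
proof (cases "y \<le> p")
  case True
  moreover have "0 \<le> C2" using right[of p] by simp
  ultimately show ?thesis using left[of y] \<open>x \<le> y\<close> by simp
next
  case False
  then have "integral {x..y} \<phi> = integral {x..p} \<phi> + integral {p..y} \<phi>"
    using \<open>x \<le> p\<close> \<phi> by (simp add: Henstock_Kurzweil_Integration.integral_combine)
  then show ?thesis
    using left[of p] right[of y] \<open>x \<le> p\<close> False norm_triangle_ineq[of "integral {x..p} \<phi>" "integral {p..y} \<phi>"]
    by simp
qed

lemma ex_tendsto_at_top_if_dist_le:
  fixes P :: "real \<Rightarrow> 'a::complete_space"
  assumes "(\<epsilon> \<longlongrightarrow> 0) at_top" and dist_le: "\<And>x y. T \<le> x \<Longrightarrow> x \<le> y \<Longrightarrow> dist (P x) (P y) \<le> \<epsilon> x"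
  shows "\<exists>L. (P \<longlongrightarrow> L) at_top"
proof -
  have "cauchy_filter (filtermap P at_top)"
    unfolding cauchy_filter_metric_filtermap
  proof (intro allI impI)
    fix e :: real assume "0 < e"
    then obtain R1 where R1: "\<And>x. R1 \<le> x \<Longrightarrow> \<epsilon> x < e"
      using order_tendstoD(2)[OF assms(1) \<open>0 < e\<close>] by (auto simp: eventually_at_top_linorder)
    have "dist (P x) (P y) < e" if "max T R1 \<le> x" "max T R1 \<le> y" for x y
    proof (cases "x \<le> y")
      case True
      then show ?thesis using dist_le[of x y] R1[of x] that by simp
    next
      case False
      then show ?thesis using dist_le[of y x] R1[of y] that by (simp add: dist_commute)
    qed
    then show "\<exists>Pr. eventually Pr at_top \<and> (\<forall>x y. Pr x \<and> Pr y \<longrightarrow> dist (P x) (P y) < e)"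
      by (intro exI[of _ "\<lambda>x. max T R1 \<le> x"] conjI eventually_ge_at_top) blast
  qed
  moreover have "filtermap P at_top \<noteq> bot" by (simp add: filtermap_bot_iff)
  ultimately obtain L where "filtermap P at_top \<le> nhds L"
    using cauchy_filter_complete_converges[OF _ complete_UNIV] by auto
  then show ?thesis unfolding filterlim_def by blast
qed

lemma W01_bound_norm_le: "W01_bound f h A B \<Longrightarrow> x \<noteq> 0 \<Longrightarrow> norm (f x) \<le> A"
  unfolding W01_bound_def by blast

lemma W01_bound_jbr_mult_norm_deriv_le: "W01_bound f h A B \<Longrightarrow> x \<noteq> 0 \<Longrightarrow> jbr x * norm (h x) \<le> B"
  unfolding W01_bound_def by blast

lemma W01_bound_norm_deriv_le:
  assumes "W01_bound f h A B" "x \<noteq> 0"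
  shows "norm (h x) \<le> B"
proof -
  have "1 \<le> jbr x" unfolding jbr_def by simp
  then have "norm (h x) \<le> jbr x * norm (h x)"
    using mult_right_mono[of 1 "jbr x" "norm (h x)"] by simp
  then show ?thesis
    using W01_bound_jbr_mult_norm_deriv_le[OF assms] by linarith
qed

lemma W01_bound_nonneg:
  assumes "W01_bound f h A B"
  shows "0 \<le> A" "0 \<le> B"
  using W01_bound_norm_le[OF assms, of 1] W01_bound_norm_deriv_le[OF assms, of 1]
  by (auto intro: order_trans[OF norm_ge_zero])

lemma W01_bound_norm_deriv_le_divide:
  assumes "W01_bound f h A B" "0 < r" "r \<le> \<bar>x\<bar>"
  shows "norm (h x) \<le> B / r"
proof -
  have "r * norm (h x) \<le> jbr x * norm (h x)"
    using assms(3) real_le_rsqrt[of "\<bar>x\<bar>" "1 + x\<^sup>2"] unfolding jbr_def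
    by (intro mult_right_mono) auto
  also have "\<dots> \<le> B" using W01_bound_jbr_mult_norm_deriv_le[OF assms(1)] assms(2,3) by auto
  finally show ?thesis using \<open>0 < r\<close> by (simp add: pos_le_divide_eq mult.commute)
qed

lemma W01_bound_primitive_on:
  assumes "W01_bound f h A B"
  shows "primitive_on f h (- {0})"
  unfolding primitive_on_def
proof (intro allI impI)
  fix s t :: real assume "s \<le> t" "{s..t} \<subseteq> - {0}"
  then have "0 \<notin> {s..t}" by blast
  then have "0 < s \<or> t < 0" by auto
  then show "(h has_integral f t - f s) {s..t}"
    using assms \<open>s \<le> t\<close> unfolding W01_bound_def by blast
qed

lemma W01_bound_isCont:
  assumes W: "W01_bound f h A B" and "x \<noteq> 0"
  shows "isCont f x"
proof -
  define r where "r = \<bar>x\<bar> / 2"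
  have "{x - r..x + r} \<subseteq> - {0}" using \<open>x \<noteq> 0\<close> unfolding r_def by auto
  moreover have "bounded (h ` {x - r..x + r})"
    using calculation W01_bound_norm_deriv_le[OF W] unfolding bounded_iff by blast
  ultimately have "continuous_on {x - r..x + r} f"
    using primitive_on_continuous_on primitive_on_subset[OF W01_bound_primitive_on[OF W]] by blast
  moreover have "x \<in> interior {x - r..x + r}" using \<open>x \<noteq> 0\<close> unfolding r_def by simp
  ultimately show ?thesis by (rule continuous_on_interior)
qed

definition K_integrand :: "(real \<Rightarrow> complex) \<Rightarrow> (real \<Rightarrow> complex) \<Rightarrow> real \<Rightarrow> real \<Rightarrow> complex" where
  "K_integrand f g \<eta> l = chirp \<eta> l * f ((\<eta> + l) / 2) * g ((\<eta> - l) / 2)"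

lemma Ktrunc_eq_integral: "Ktrunc f g \<eta> R = integral {-R..R} (K_integrand f g \<eta>)"
  unfolding Ktrunc_def K_integrand_def chirp_def ..

lemma K_integrand_reflect: "K_integrand g f \<eta> (- l) = K_integrand f g \<eta> l"
  unfolding K_integrand_def chirp_def by (simp add: mult_ac)

lemma norm_K_integrand_le:
  assumes "W01_bound f hf A B" "W01_bound g hg A' B'" "\<eta> + l \<noteq> 0" "\<eta> - l \<noteq> 0"
  shows "norm (K_integrand f g \<eta> l) \<le> A * A'"
proof -
  have "norm (K_integrand f g \<eta> l) = norm (f ((\<eta> + l) / 2)) * norm (g ((\<eta> - l) / 2))"
    unfolding K_integrand_def by (simp add: norm_mult)
  also have "\<dots> \<le> A * A'"
    using assms W01_bound_norm_le[OF assms(1)] W01_bound_norm_le[OF assms(2)] W01_bound_nonneg[OF assms(1)]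
    by (intro mult_mono) auto
  finally show ?thesis .
qed

lemma K_integrand_integrable_on:
  assumes Wf: "W01_bound f hf A B" and Wg: "W01_bound g hg A' B'"
  shows "K_integrand f g \<eta> integrable_on {a..b}"
proof -
  define S where "S = {a..b} - {-\<eta>, \<eta>}"
  have "{-\<eta>, \<eta>} \<in> sets lebesgue" by (intro negligible_imp_sets negligible_finite) simp
  then have S: "S \<in> sets lebesgue" unfolding S_def by (intro sets.Diff) auto
  have "continuous_on S (K_integrand f g \<eta>)"
  proof (intro continuous_at_imp_continuous_on ballI)
    fix l assume "l \<in> S"
    then have "(\<eta> + l) / 2 \<noteq> 0" "(\<eta> - l) / 2 \<noteq> 0" unfolding S_def by auto
    then have "isCont f ((\<eta> + l) / 2)" "isCont g ((\<eta> - l) / 2)"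
      using W01_bound_isCont[OF Wf] W01_bound_isCont[OF Wg] by blast+
    then have "isCont (\<lambda>l. f ((\<eta> + l) / 2)) l" "isCont (\<lambda>l. g ((\<eta> - l) / 2)) l"
      by (auto intro!: isCont_o2[where g = f] isCont_o2[where g = g] continuous_intros)
    then show "isCont (K_integrand f g \<eta>) l"
      unfolding K_integrand_def chirp_def by (intro continuous_intros) auto
  qed
  then have "K_integrand f g \<eta> \<in> borel_measurable (lebesgue_on S)"
    by (rule continuous_imp_measurable_on_sets_lebesgue[OF _ S])
  then have "K_integrand f g \<eta> integrable_on S"
  proof (rule measurable_bounded_by_integrable_imp_integrable[OF _ _ _ S])
    show "(\<lambda>_. A * A') integrable_on S"
      using S unfolding S_def by (intro integrable_on_const) (auto intro: fmeasurableI2[of "{a..b}"])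
    show "norm (K_integrand f g \<eta> l) \<le> A * A'" if "l \<in> S" for l
      using that unfolding S_def by (intro norm_K_integrand_le[OF Wf Wg]) auto
  qed
  then show ?thesis
    by (rule integrable_spike_set) (auto simp: S_def intro: negligible_subset[of "{-\<eta>, \<eta>}"])
qed

lemma norm_integral_K_integrand_le_length:
  assumes Wf: "W01_bound f hf A B" and Wg: "W01_bound g hg A' B'" and "a \<le> b"
  shows "norm (integral {a..b} (K_integrand f g \<eta>)) \<le> A * A' * (b - a)"
proof -
  have "norm (integral {a..b} (K_integrand f g \<eta>)) \<le> A * A' * Henstock_Kurzweil_Integration.content {a..b}"
  proof (rule has_integral_bound_real[where S = "{-\<eta>, \<eta>}"])
    show "0 \<le> A * A'" using W01_bound_nonneg[OF Wf] W01_bound_nonneg[OF Wg] by simp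
    show "(K_integrand f g \<eta> has_integral integral {a..b} (K_integrand f g \<eta>)) {a..b}"
      by (rule integrable_integral[OF K_integrand_integrable_on[OF Wf Wg]])
    show "norm (K_integrand f g \<eta> l) \<le> A * A'" if "l \<in> {a..b} - {-\<eta>, \<eta>}" for l
      using that by (intro norm_K_integrand_le[OF Wf Wg]) auto
  qed simp
  then show ?thesis using \<open>a \<le> b\<close> by simp
qed

lemma Ktrunc_eq_half_line_integrals:
  assumes Wf: "W01_bound f hf A B" and Wg: "W01_bound g hg A' B'" and "0 \<le> R"
  shows "Ktrunc f g \<eta> R = integral {0..R} (K_integrand g f \<eta>) + integral {0..R} (K_integrand f g \<eta>)"
proof -
  have "Ktrunc f g \<eta> R = integral {-R..0} (K_integrand f g \<eta>) + integral {0..R} (K_integrand f g \<eta>)"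
    unfolding Ktrunc_eq_integral using \<open>0 \<le> R\<close>
    by (intro Henstock_Kurzweil_Integration.integral_combine[symmetric] K_integrand_integrable_on[OF Wf Wg]) auto
  also have "integral {-R..0} (K_integrand f g \<eta>) = integral {0..R} (K_integrand g f \<eta>)"
    using Henstock_Kurzweil_Integration.integral_reflect_real[of R 0 "K_integrand g f \<eta>"]
    by (simp add: K_integrand_reflect)
  finally show ?thesis .
qed

lemma W01_bound_amplitude_primitive_on:
  assumes Wf: "W01_bound f hf A B" and Wg: "W01_bound g hg A' B'"
    and off0: "\<And>l. l \<in> {x..y} \<Longrightarrow> (\<eta> + l) / 2 \<noteq> 0 \<and> (\<eta> - l) / 2 \<noteq> 0"
  shows "primitive_on (\<lambda>l. f ((\<eta> + l) / 2) * g ((\<eta> - l) / 2))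
    (\<lambda>l. hf ((\<eta> + l) / 2) / 2 * g ((\<eta> - l) / 2) + f ((\<eta> + l) / 2) * - (hg ((\<eta> - l) / 2) / 2)) {x..y}"
proof (rule primitive_on_mult)
  have plus: "\<And>l. 1 / 2 * l + \<eta> / 2 = (\<eta> + l) / 2" and minus: "\<And>l. - 1 / 2 * l + \<eta> / 2 = (\<eta> - l) / 2"
    by (simp_all add: field_simps)
  show "primitive_on (\<lambda>l. f ((\<eta> + l) / 2)) (\<lambda>l. hf ((\<eta> + l) / 2) / 2) {x..y}"
    using primitive_on_compose_affine[OF W01_bound_primitive_on[OF Wf], of "1 / 2" "\<eta> / 2"] off0
    unfolding plus by (auto elim!: primitive_on_subset simp: mult.commute)
  show "primitive_on (\<lambda>l. g ((\<eta> - l) / 2)) (\<lambda>l. - (hg ((\<eta> - l) / 2) / 2)) {x..y}"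
    using primitive_on_compose_affine[OF W01_bound_primitive_on[OF Wg], of "- 1 / 2" "\<eta> / 2"] off0
    unfolding minus by (auto elim!: primitive_on_subset simp: mult.commute)
  show "bounded ((\<lambda>l. hf ((\<eta> + l) / 2) / 2) ` {x..y})"
    using off0 W01_bound_norm_deriv_le[OF Wf]
    unfolding bounded_iff by (auto simp: norm_divide intro!: exI[of _ "B / 2"])
  show "bounded ((\<lambda>l. - (hg ((\<eta> - l) / 2) / 2)) ` {x..y})"
    using off0 W01_bound_norm_deriv_le[OF Wg]
    unfolding bounded_iff by (auto simp: norm_divide intro!: exI[of _ "B' / 2"])
qed

lemma norm_amplitude_deriv_le:
  assumes Wf: "W01_bound f hf A B" and Wg: "W01_bound g hg A' B'" and "(\<eta> + l) / 2 \<noteq> 0" "(\<eta> - l) / 2 \<noteq> 0"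
  shows "norm (hf ((\<eta> + l) / 2) / 2 * g ((\<eta> - l) / 2) + f ((\<eta> + l) / 2) * - (hg ((\<eta> - l) / 2) / 2))
    \<le> (norm (hf ((\<eta> + l) / 2)) * A' + A * norm (hg ((\<eta> - l) / 2))) / 2"
proof -
  have "norm (hf ((\<eta> + l) / 2) / 2 * g ((\<eta> - l) / 2) + f ((\<eta> + l) / 2) * - (hg ((\<eta> - l) / 2) / 2))
      \<le> norm (hf ((\<eta> + l) / 2) / 2 * g ((\<eta> - l) / 2)) + norm (f ((\<eta> + l) / 2) * - (hg ((\<eta> - l) / 2) / 2))"
    by (rule norm_triangle_ineq)
  also have "\<dots> = norm (hf ((\<eta> + l) / 2)) / 2 * norm (g ((\<eta> - l) / 2))
      + norm (f ((\<eta> + l) / 2)) * (norm (hg ((\<eta> - l) / 2)) / 2)"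
    by (simp add: norm_mult norm_divide)
  also have "\<dots> \<le> norm (hf ((\<eta> + l) / 2)) / 2 * A' + A * (norm (hg ((\<eta> - l) / 2)) / 2)"
    using assms W01_bound_nonneg[OF Wf] W01_bound_norm_le[OF Wf] W01_bound_norm_le[OF Wg]
    by (intro add_mono mult_mono) auto
  finally show ?thesis by (simp add: field_simps)
qed

lemma norm_integral_K_integrand_by_parts_le:
  assumes Wf: "W01_bound f hf A B" and Wg: "W01_bound g hg A' B'" and "\<eta> \<noteq> 0"
    and "0 < x" "x \<le> y" and away: "\<bar>\<eta>\<bar> \<notin> {x..y}"
    and Q: "Q integrable_on {x..y}"
    and Q_ge: "\<And>l. l \<in> {x..y} \<Longrightarrow> (norm (hf ((\<eta> + l) / 2)) * A' + A * norm (hg ((\<eta> - l) / 2))) / (2 * l) \<le> Q l"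
  shows "norm (integral {x..y} (K_integrand f g \<eta>)) \<le> 2 * A * A' / (\<bar>\<eta>\<bar> * x) + 2 / (3 * \<bar>\<eta>\<bar>) * integral {x..y} Q"
proof -
  have A: "0 \<le> A" "0 \<le> A'" using W01_bound_nonneg[OF Wf] W01_bound_nonneg[OF Wg] by auto
  have off0: "(\<eta> + l) / 2 \<noteq> 0 \<and> (\<eta> - l) / 2 \<noteq> 0" if "l \<in> {x..y}" for l
    using that away \<open>0 < x\<close> by auto
  define F where "F = (\<lambda>l. f ((\<eta> + l) / 2) * g ((\<eta> - l) / 2))"
  define F' where "F' = (\<lambda>l. hf ((\<eta> + l) / 2) / 2 * g ((\<eta> - l) / 2) + f ((\<eta> + l) / 2) * - (hg ((\<eta> - l) / 2) / 2))"
  have F: "primitive_on F F' {x..y}"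
    unfolding F_def F'_def using W01_bound_amplitude_primitive_on[OF Wf Wg off0] .
  have norm_F': "norm (F' l) \<le> (norm (hf ((\<eta> + l) / 2)) * A' + A * norm (hg ((\<eta> - l) / 2))) / 2"
    if "l \<in> {x..y}" for l
    unfolding F'_def using norm_amplitude_deriv_le[OF Wf Wg] off0[OF that] by blast
  have "bounded (F' ` {x..y})"
    unfolding bounded_iff
  proof (intro exI ballI, elim imageE)
    fix z l assume "z = F' l" "l \<in> {x..y}"
    have "norm (hf ((\<eta> + l) / 2)) * A' + A * norm (hg ((\<eta> - l) / 2)) \<le> B * A' + A * B'"
      using off0[OF \<open>l \<in> {x..y}\<close>] W01_bound_norm_deriv_le[OF Wf] W01_bound_norm_deriv_le[OF Wg] A
      by (intro add_mono mult_right_mono mult_left_mono) auto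
    then have "(norm (hf ((\<eta> + l) / 2)) * A' + A * norm (hg ((\<eta> - l) / 2))) / 2 \<le> (B * A' + A * B') / 2"
      by (simp add: divide_right_mono)
    then show "norm z \<le> (B * A' + A * B') / 2"
      unfolding \<open>z = F' l\<close> by (rule order_trans[OF norm_F'[OF \<open>l \<in> {x..y}\<close>]])
  qed
  moreover have "norm (F l) \<le> A * A'" if "l \<in> {x..y}" for l
    unfolding F_def norm_mult using off0[OF that] A W01_bound_norm_le[OF Wf] W01_bound_norm_le[OF Wg]
    by (intro mult_mono) auto
  moreover have "norm (F' l) / l \<le> Q l" if "l \<in> {x..y}" for l
    using divide_right_mono[OF norm_F'[OF that], of l] Q_ge[OF that] \<open>0 < x\<close> that by auto
  ultimately have "norm (integral {x..y} (\<lambda>l. chirp \<eta> l * F l)) \<le> 2 * (A * A') / (\<bar>\<eta>\<bar> * x) + 2 / (3 * \<bar>\<eta>\<bar>) * integral {x..y} Q"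
    by (intro norm_integral_chirp_mult_le[OF F _ \<open>0 < x\<close> \<open>x \<le> y\<close> \<open>\<eta> \<noteq> 0\<close> _ Q])
  moreover have "(\<lambda>l. chirp \<eta> l * F l) = K_integrand f g \<eta>"
    unfolding F_def K_integrand_def by (simp add: mult.assoc)
  ultimately show ?thesis by (simp add: mult.assoc)
qed

lemma norm_integral_K_integrand_le:
  assumes Wf: "W01_bound f hf A B" and Wg: "W01_bound g hg A' B'" and "\<eta> \<noteq> 0"
    and "0 < x" "x \<le> y"
    and Q: "Q integrable_on {x..y}" and Q_nonneg: "\<And>l. l \<in> {x..y} \<Longrightarrow> 0 \<le> Q l"
    and Q_ge: "\<And>l. l \<in> {x..y} \<Longrightarrow> l \<noteq> \<bar>\<eta>\<bar> \<Longrightarrow>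
      (norm (hf ((\<eta> + l) / 2)) * A' + A * norm (hg ((\<eta> - l) / 2))) / (2 * l) \<le> Q l"
  shows "norm (integral {x..y} (K_integrand f g \<eta>)) \<le> 4 * A * A' / (\<bar>\<eta>\<bar> * x) + 2 / (3 * \<bar>\<eta>\<bar>) * integral {x..y} Q"
proof -
  have A: "0 \<le> A" "0 \<le> A'" using W01_bound_nonneg[OF Wf] W01_bound_nonneg[OF Wg] by auto
  define c where "c = 2 / (3 * \<bar>\<eta>\<bar>)"
  have "c > 0" using \<open>\<eta> \<noteq> 0\<close> unfolding c_def by simp
  have "norm (integral {x..y} (K_integrand f g \<eta>)) \<le> 2 * (2 * A * A' / (\<bar>\<eta>\<bar> * x)) + integral {x..y} (\<lambda>l. c * Q l)"
  proof (rule norm_integral_le_excising_point[where p = "\<bar>\<eta>\<bar>" and M = "A * A'"])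
    fix s t assume st: "x \<le> s" "s \<le> t" "t \<le> y" and "\<bar>\<eta>\<bar> \<notin> {s..t}"
    have "norm (integral {s..t} (K_integrand f g \<eta>)) \<le> 2 * A * A' / (\<bar>\<eta>\<bar> * s) + c * integral {s..t} Q"
      unfolding c_def
    proof (rule norm_integral_K_integrand_by_parts_le[OF Wf Wg \<open>\<eta> \<noteq> 0\<close>])
      show "Q integrable_on {s..t}" using st by (intro integrable_subinterval_real[OF Q]) auto
    qed (use st \<open>0 < x\<close> \<open>\<bar>\<eta>\<bar> \<notin> {s..t}\<close> Q_ge in auto)
    also have "2 * A * A' / (\<bar>\<eta>\<bar> * s) \<le> 2 * A * A' / (\<bar>\<eta>\<bar> * x)"
      using A st \<open>0 < x\<close> \<open>\<eta> \<noteq> 0\<close> by (intro divide_left_mono mult_left_mono) auto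
    finally show "norm (integral {s..t} (K_integrand f g \<eta>)) \<le> 2 * A * A' / (\<bar>\<eta>\<bar> * x) + integral {s..t} (\<lambda>l. c * Q l)"
      by simp
  qed (use A \<open>0 < x\<close> \<open>x \<le> y\<close> \<open>c > 0\<close> Q Q_nonneg
      in \<open>auto intro: K_integrand_integrable_on[OF Wf Wg] norm_integral_K_integrand_le_length[OF Wf Wg]\<close>)
  then show ?thesis unfolding c_def by simp
qed

lemma norm_integral_K_integrand_le_log:
  assumes Wf: "W01_bound f hf A B" and Wg: "W01_bound g hg A' B'" and "\<eta> \<noteq> 0"
    and "0 < x" "x \<le> y"
  shows "norm (integral {x..y} (K_integrand f g \<eta>))
    \<le> 4 * A * A' / (\<bar>\<eta>\<bar> * x) + (B * A' + A * B') / (3 * \<bar>\<eta>\<bar>) * (ln y - ln x)"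
proof -
  define S where "S = B * A' + A * B'"
  have "0 \<le> S" unfolding S_def using W01_bound_nonneg[OF Wf] W01_bound_nonneg[OF Wg] by simp
  have Q: "((\<lambda>l. S / 2 * (1 / l)) has_integral (S / 2 * (ln y - ln x))) {x..y}"
    by (intro has_integral_mult_right has_integral_inverse \<open>0 < x\<close> \<open>x \<le> y\<close>)
  have "norm (integral {x..y} (K_integrand f g \<eta>)) \<le> 4 * A * A' / (\<bar>\<eta>\<bar> * x) + 2 / (3 * \<bar>\<eta>\<bar>) * (S / 2 * (ln y - ln x))"
    unfolding integral_unique[OF Q, symmetric]
  proof (rule norm_integral_K_integrand_le[OF Wf Wg \<open>\<eta> \<noteq> 0\<close> \<open>0 < x\<close> \<open>x \<le> y\<close> has_integral_integrable[OF Q]])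
    fix l assume l: "l \<in> {x..y}" "l \<noteq> \<bar>\<eta>\<bar>"
    then have "0 < l" using \<open>0 < x\<close> by auto
    with l have "(\<eta> + l) / 2 \<noteq> 0" "(\<eta> - l) / 2 \<noteq> 0" by auto
    then have "norm (hf ((\<eta> + l) / 2)) * A' + A * norm (hg ((\<eta> - l) / 2)) \<le> S"
      unfolding S_def using W01_bound_norm_deriv_le[OF Wf] W01_bound_norm_deriv_le[OF Wg]
        W01_bound_nonneg[OF Wf] W01_bound_nonneg[OF Wg]
      by (intro add_mono mult_right_mono mult_left_mono) auto
    then show "(norm (hf ((\<eta> + l) / 2)) * A' + A * norm (hg ((\<eta> - l) / 2))) / (2 * l) \<le> S / 2 * (1 / l)"
      using \<open>0 < l\<close> by (simp add: divide_right_mono)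
  qed (use \<open>0 \<le> S\<close> \<open>0 < x\<close> in auto)
  also have "2 / (3 * \<bar>\<eta>\<bar>) * (S / 2 * (ln y - ln x)) = S / (3 * \<bar>\<eta>\<bar>) * (ln y - ln x)"
    by simp
  finally show ?thesis unfolding S_def .
qed

lemma norm_integral_K_integrand_le_far:
  assumes Wf: "W01_bound f hf A B" and Wg: "W01_bound g hg A' B'" and "\<eta> \<noteq> 0"
    and "2 * \<bar>\<eta>\<bar> \<le> x" "x \<le> y"
  shows "norm (integral {x..y} (K_integrand f g \<eta>)) \<le> (4 * A * A' + 4 * (B * A' + A * B') / 3) / (\<bar>\<eta>\<bar> * x)"
proof -
  define S where "S = B * A' + A * B'"
  have "0 \<le> S" unfolding S_def using W01_bound_nonneg[OF Wf] W01_bound_nonneg[OF Wg] by simp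
  have "0 < x" using assms(3,4) by (smt (verit) zero_less_abs_iff)
  have Q: "((\<lambda>l. 2 * S * (1 / l\<^sup>2)) has_integral (2 * S * (1 / x - 1 / y))) {x..y}"
    by (intro has_integral_mult_right has_integral_inverse_square \<open>0 < x\<close> \<open>x \<le> y\<close>)
  have "norm (integral {x..y} (K_integrand f g \<eta>)) \<le> 4 * A * A' / (\<bar>\<eta>\<bar> * x) + 2 / (3 * \<bar>\<eta>\<bar>) * (2 * S * (1 / x - 1 / y))"
    unfolding integral_unique[OF Q, symmetric]
  proof (rule norm_integral_K_integrand_le[OF Wf Wg \<open>\<eta> \<noteq> 0\<close> \<open>0 < x\<close> \<open>x \<le> y\<close> has_integral_integrable[OF Q]])
    fix l assume l: "l \<in> {x..y}"
    then have "0 < l" "2 * \<bar>\<eta>\<bar> \<le> l" using \<open>0 < x\<close> \<open>2 * \<bar>\<eta>\<bar> \<le> x\<close> by auto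
    \<comment> \<open>Far from the singular point both arguments have size at least \<open>l / 4\<close>, so the weight \<open>\<langle>x\<rangle>\<close> in the
      norm gives the extra decay \<open>|hf|, |hg| \<le> 4 B / l\<close>.\<close>
    then have far: "l / 4 \<le> \<bar>(\<eta> + l) / 2\<bar>" "l / 4 \<le> \<bar>(\<eta> - l) / 2\<bar>" by auto
    have "norm (hf ((\<eta> + l) / 2)) \<le> B / (l / 4)"
      by (rule W01_bound_norm_deriv_le_divide[OF Wf]) (use \<open>0 < l\<close> far(1) in auto)
    moreover have "norm (hg ((\<eta> - l) / 2)) \<le> B' / (l / 4)"
      by (rule W01_bound_norm_deriv_le_divide[OF Wg]) (use \<open>0 < l\<close> far(2) in auto)
    ultimately have "(norm (hf ((\<eta> + l) / 2)) * A' + A * norm (hg ((\<eta> - l) / 2))) / (2 * l)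
        \<le> (B / (l / 4) * A' + A * (B' / (l / 4))) / (2 * l)"
      using W01_bound_nonneg[OF Wf] W01_bound_nonneg[OF Wg] \<open>0 < l\<close>
      by (intro divide_right_mono add_mono mult_right_mono mult_left_mono) auto
    also have "\<dots> = 2 * S * (1 / l\<^sup>2)"
      unfolding S_def using \<open>0 < l\<close> by (simp add: field_simps power2_eq_square)
    finally show "(norm (hf ((\<eta> + l) / 2)) * A' + A * norm (hg ((\<eta> - l) / 2))) / (2 * l) \<le> 2 * S * (1 / l\<^sup>2)" .
  qed (use \<open>0 \<le> S\<close> in auto)
  also have "\<dots> \<le> 4 * A * A' / (\<bar>\<eta>\<bar> * x) + 2 / (3 * \<bar>\<eta>\<bar>) * (2 * S * (1 / x))"
    using \<open>0 \<le> S\<close> \<open>0 < x\<close> \<open>x \<le> y\<close> by (intro add_left_mono mult_left_mono) auto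
  also have "\<dots> = (4 * A * A' + 4 * S / 3) / (\<bar>\<eta>\<bar> * x)"
    using \<open>\<eta> \<noteq> 0\<close> \<open>0 < x\<close> by (simp add: field_simps)
  finally show ?thesis unfolding S_def .
qed

lemma ln_mult_le_three_mul:
  fixes s t :: real
  assumes "0 < s" "0 < t" "t \<le> 2 * s\<^sup>2"
  shows "ln (t * s) \<le> 3 * s"
proof -
  have "ln (t * s) \<le> ln (2 * s\<^sup>2 * s)"
    using assms by (subst ln_le_cancel_iff) (auto intro: mult_right_mono)
  also have "\<dots> = ln 2 + 3 * ln s" using \<open>0 < s\<close> by (simp add: ln_mult ln_realpow power2_eq_square)
  also have "\<dots> \<le> 3 * s" using ln_le_minus_one[OF \<open>0 < s\<close>] ln_2_less_1 by linarith
  finally show ?thesis .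
qed

lemma norm_integral_K_integrand_le_intermediate:
  assumes Wf: "W01_bound f hf A B" and Wg: "W01_bound g hg A' B'" and "\<eta> \<noteq> 0"
    and "1 / sqrt \<bar>\<eta>\<bar> \<le> t" "t \<le> 2 * \<bar>\<eta>\<bar>"
  shows "norm (integral {1 / sqrt \<bar>\<eta>\<bar>..t} (K_integrand f g \<eta>)) \<le> (4 * A * A' + (B * A' + A * B')) / sqrt \<bar>\<eta>\<bar>"
proof -
  define s where "s = sqrt \<bar>\<eta>\<bar>"
  define S where "S = B * A' + A * B'"
  have "0 < s" and e: "\<bar>\<eta>\<bar> = s\<^sup>2" unfolding s_def using \<open>\<eta> \<noteq> 0\<close> by simp_all
  have "0 \<le> S" unfolding S_def using W01_bound_nonneg[OF Wf] W01_bound_nonneg[OF Wg] by simp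
  have "0 < t" using assms(4) \<open>0 < s\<close> unfolding s_def[symmetric] by (meson divide_pos_pos order_less_le_trans zero_less_one)
  have "ln t - ln (1 / s) = ln (t * s)" using \<open>0 < s\<close> \<open>0 < t\<close> by (simp add: ln_div ln_mult)
  also have "\<dots> \<le> 3 * s" using ln_mult_le_three_mul \<open>0 < s\<close> \<open>0 < t\<close> assms(5) unfolding e by blast
  finally have "S / (3 * \<bar>\<eta>\<bar>) * (ln t - ln (1 / s)) \<le> S / (3 * \<bar>\<eta>\<bar>) * (3 * s)"
    using \<open>0 \<le> S\<close> by (intro mult_left_mono) auto
  also have "\<dots> = S / s" using \<open>0 < s\<close> unfolding e by (simp add: power2_eq_square)
  finally have "S / (3 * \<bar>\<eta>\<bar>) * (ln t - ln (1 / s)) \<le> S / s" .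
  moreover have "norm (integral {1 / s..t} (K_integrand f g \<eta>))
      \<le> 4 * A * A' / (\<bar>\<eta>\<bar> * (1 / s)) + S / (3 * \<bar>\<eta>\<bar>) * (ln t - ln (1 / s))"
    unfolding S_def using assms(4,5) \<open>0 < s\<close> unfolding s_def[symmetric]
    by (intro norm_integral_K_integrand_le_log[OF Wf Wg \<open>\<eta> \<noteq> 0\<close>]) auto
  moreover have "\<bar>\<eta>\<bar> * (1 / s) = s" using \<open>0 < s\<close> unfolding e by (simp add: power2_eq_square)
  then have "4 * A * A' / (\<bar>\<eta>\<bar> * (1 / s)) = 4 * A * A' / s" by (simp only:)
  ultimately have "norm (integral {1 / s..t} (K_integrand f g \<eta>)) \<le> 4 * A * A' / s + S / s"
    by linarith
  then show ?thesis unfolding s_def S_def by (simp add: add_divide_distrib)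
qed

lemma norm_integral_K_integrand_half_line_le:
  assumes Wf: "W01_bound f hf A B" and Wg: "W01_bound g hg A' B'" and "\<eta> \<noteq> 0" and "0 \<le> R"
  shows "norm (integral {0..R} (K_integrand f g \<eta>)) \<le> 9 / sqrt \<bar>\<eta>\<bar> * (A + B) * (A' + B')"
proof -
  define M where "M = A * A'"
  define S where "S = B * A' + A * B'"
  define s where "s = sqrt \<bar>\<eta>\<bar>"
  have "0 \<le> M" "0 \<le> S"
    unfolding M_def S_def using W01_bound_nonneg[OF Wf] W01_bound_nonneg[OF Wg] by simp_all
  have "0 < s" and es: "\<bar>\<eta>\<bar> * (1 / s) = s" unfolding s_def using \<open>\<eta> \<noteq> 0\<close> by (simp_all add: real_div_sqrt)
  \<comment> \<open>\<open>1 / s\<close> is the stationary-phase scale: below it the trivial bound is sharp, above it the oscillation wins.\<close>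
  define p where "p = max (1 / s) (2 * \<bar>\<eta>\<bar>)"
  have integrable: "K_integrand f g \<eta> integrable_on {a..b}" for a b
    by (rule K_integrand_integrable_on[OF Wf Wg])
  have near: "norm (integral {0..t} (K_integrand f g \<eta>)) \<le> M / s" if "0 \<le> t" "t \<le> 1 / s" for t
  proof -
    have "norm (integral {0..t} (K_integrand f g \<eta>)) \<le> M * (t - 0)"
      unfolding M_def using that by (intro norm_integral_K_integrand_le_length[OF Wf Wg]) auto
    also have "\<dots> \<le> M * (1 / s)" using that \<open>0 \<le> M\<close> by (intro mult_left_mono) auto
    finally show ?thesis by simp
  qed
  have middle: "norm (integral {1 / s..t} (K_integrand f g \<eta>)) \<le> (4 * M + S) / s" if "1 / s \<le> t" "t \<le> p" for t
  proof (cases "t \<le> 2 * \<bar>\<eta>\<bar>")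
    case True
    then show ?thesis
      using norm_integral_K_integrand_le_intermediate[OF Wf Wg \<open>\<eta> \<noteq> 0\<close>] that
      unfolding M_def S_def s_def by (simp add: mult.assoc)
  next
    case False
    then have "t = 1 / s" using that unfolding p_def by auto
    then show ?thesis using \<open>0 \<le> M\<close> \<open>0 \<le> S\<close> \<open>0 < s\<close> by simp
  qed
  have far: "norm (integral {p..t} (K_integrand f g \<eta>)) \<le> (4 * M + 4 * S / 3) / s" if "p \<le> t" for t
  proof -
    have "2 * \<bar>\<eta>\<bar> \<le> p" by (simp add: p_def)
    from norm_integral_K_integrand_le_far[OF Wf Wg \<open>\<eta> \<noteq> 0\<close> this that]
    have "norm (integral {p..t} (K_integrand f g \<eta>)) \<le> (4 * M + 4 * S / 3) / (\<bar>\<eta>\<bar> * p)"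
      unfolding M_def S_def by (simp add: mult.assoc)
    also have "\<dots> \<le> (4 * M + 4 * S / 3) / s"
    proof (rule divide_left_mono)
      have "\<bar>\<eta>\<bar> * (1 / s) \<le> \<bar>\<eta>\<bar> * p" by (intro mult_left_mono) (auto simp: p_def)
      then show "s \<le> \<bar>\<eta>\<bar> * p" unfolding es .
    qed (use \<open>0 \<le> M\<close> \<open>0 \<le> S\<close> \<open>0 < s\<close> \<open>2 * \<bar>\<eta>\<bar> \<le> p\<close> \<open>\<eta> \<noteq> 0\<close> in auto)
    finally show ?thesis .
  qed
  have beyond: "norm (integral {1 / s..t} (K_integrand f g \<eta>)) \<le> (4 * M + S) / s + (4 * M + 4 * S / 3) / s"
    if "1 / s \<le> t" for t
    by (rule norm_integral_le_split[OF integrable, where p = p]) (use that middle far in \<open>auto simp: p_def\<close>)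
  have "norm (integral {0..R} (K_integrand f g \<eta>)) \<le> M / s + ((4 * M + S) / s + (4 * M + 4 * S / 3) / s)"
    by (rule norm_integral_le_split[OF integrable, where p = "1 / s"]) (use near beyond \<open>0 < s\<close> \<open>0 \<le> R\<close> in auto)
  also have "\<dots> \<le> (9 * M + 3 * S) / s"
    using \<open>0 \<le> S\<close> \<open>0 < s\<close> by (simp add: field_simps)
  also have "\<dots> \<le> 9 * ((A + B) * (A' + B')) / s"
  proof (rule divide_right_mono)
    have "0 \<le> A * B'" "0 \<le> B * A'" "0 \<le> B * B'"
      using W01_bound_nonneg[OF Wf] W01_bound_nonneg[OF Wg] by simp_all
    then show "9 * M + 3 * S \<le> 9 * ((A + B) * (A' + B'))"
      unfolding M_def S_def by (simp add: algebra_simps)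
  qed (use \<open>0 < s\<close> in simp)
  also have "\<dots> = 9 / s * (A + B) * (A' + B')" by simp
  finally show ?thesis unfolding s_def .
qed

lemma K_integrand_half_line_limit:
  assumes Wf: "W01_bound f hf A B" and Wg: "W01_bound g hg A' B'" and "\<eta> \<noteq> 0"
  shows "\<exists>L. ((\<lambda>R. integral {0..R} (K_integrand f g \<eta>)) \<longlongrightarrow> L) at_top \<and>
    norm L \<le> 9 / sqrt \<bar>\<eta>\<bar> * (A + B) * (A' + B')"
proof -
  define C where "C = (4 * A * A' + 4 * (B * A' + A * B') / 3) / \<bar>\<eta>\<bar>"
  have "\<exists>L. ((\<lambda>R. integral {0..R} (K_integrand f g \<eta>)) \<longlongrightarrow> L) at_top"
  proof (rule ex_tendsto_at_top_if_dist_le[where \<epsilon> = "\<lambda>x. C / x" and T = "2 * \<bar>\<eta>\<bar>"])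
    show "((\<lambda>x. C / x) \<longlongrightarrow> 0) at_top"
      by (rule tendsto_divide_0[OF tendsto_const filterlim_at_top_imp_at_infinity[OF filterlim_ident]])
    fix x y :: real assume xy: "2 * \<bar>\<eta>\<bar> \<le> x" "x \<le> y"
    then have "0 < x" using \<open>\<eta> \<noteq> 0\<close> by (smt (verit) zero_less_abs_iff)
    then have "integral {0..x} (K_integrand f g \<eta>) + integral {x..y} (K_integrand f g \<eta>) = integral {0..y} (K_integrand f g \<eta>)"
      using xy by (intro Henstock_Kurzweil_Integration.integral_combine K_integrand_integrable_on[OF Wf Wg]) auto
    then have "dist (integral {0..x} (K_integrand f g \<eta>)) (integral {0..y} (K_integrand f g \<eta>))
        = norm (integral {x..y} (K_integrand f g \<eta>))"
      by (metis add_diff_cancel_left' dist_norm norm_minus_commute)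
    also have "\<dots> \<le> C / x"
      using norm_integral_K_integrand_le_far[OF Wf Wg \<open>\<eta> \<noteq> 0\<close> xy] \<open>0 < x\<close> unfolding C_def by simp
    finally show "dist (integral {0..x} (K_integrand f g \<eta>)) (integral {0..y} (K_integrand f g \<eta>)) \<le> C / x" .
  qed
  then obtain L where L: "((\<lambda>R. integral {0..R} (K_integrand f g \<eta>)) \<longlongrightarrow> L) at_top" ..
  moreover have "\<forall>\<^sub>F R in at_top. norm (integral {0..R} (K_integrand f g \<eta>))
      \<le> 9 / sqrt \<bar>\<eta>\<bar> * (A + B) * (A' + B')"
    using eventually_ge_at_top[of 0]
    by eventually_elim (rule norm_integral_K_integrand_half_line_le[OF Wf Wg \<open>\<eta> \<noteq> 0\<close>])
  then have "norm L \<le> 9 / sqrt \<bar>\<eta>\<bar> * (A + B) * (A' + B')"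
    by (intro tendsto_upperbound[OF tendsto_norm[OF L]]) simp_all
  ultimately show ?thesis by blast
qed

theorem lemma3p1:
  shows "\<exists>C. \<forall>f g hf hg A B A' B' \<eta>.
     W01_bound f hf A B \<longrightarrow> W01_bound g hg A' B' \<longrightarrow> \<eta> \<noteq> 0 \<longrightarrow>
     (\<exists>L. (Ktrunc f g \<eta> \<longlongrightarrow> L) at_top \<and>
          norm L \<le> C / sqrt \<bar>\<eta>\<bar> * (A + B) * (A' + B'))"
proof (intro exI[of _ "18 :: real"] allI impI)
  fix f g hf hg A B A' B' and \<eta> :: real
  assume Wf: "W01_bound f hf A B" and Wg: "W01_bound g hg A' B'" and "\<eta> \<noteq> 0"
  obtain L1 where L1: "((\<lambda>R. integral {0..R} (K_integrand f g \<eta>)) \<longlongrightarrow> L1) at_top"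
    and bound1: "norm L1 \<le> 9 / sqrt \<bar>\<eta>\<bar> * (A + B) * (A' + B')"
    using K_integrand_half_line_limit[OF Wf Wg \<open>\<eta> \<noteq> 0\<close>] by blast
  obtain L2 where L2: "((\<lambda>R. integral {0..R} (K_integrand g f \<eta>)) \<longlongrightarrow> L2) at_top"
    and bound2: "norm L2 \<le> 9 / sqrt \<bar>\<eta>\<bar> * (A' + B') * (A + B)"
    using K_integrand_half_line_limit[OF Wg Wf \<open>\<eta> \<noteq> 0\<close>] by blast
  have "\<forall>\<^sub>F R in at_top. integral {0..R} (K_integrand g f \<eta>) + integral {0..R} (K_integrand f g \<eta>) = Ktrunc f g \<eta> R"
    using eventually_ge_at_top[of 0] by eventually_elim (rule Ktrunc_eq_half_line_integrals[OF Wf Wg, symmetric])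
  from tendsto_cong[OF this] have lim: "(Ktrunc f g \<eta> \<longlongrightarrow> L2 + L1) at_top"
    using tendsto_add[OF L2 L1] by simp
  have "9 / sqrt \<bar>\<eta>\<bar> * (A' + B') * (A + B) = 9 / sqrt \<bar>\<eta>\<bar> * (A + B) * (A' + B')"
    by (simp only: mult.assoc mult.commute[of "A' + B'"])
  moreover have "18 / sqrt \<bar>\<eta>\<bar> * (A + B) * (A' + B')
      = 9 / sqrt \<bar>\<eta>\<bar> * (A + B) * (A' + B') + 9 / sqrt \<bar>\<eta>\<bar> * (A + B) * (A' + B')"
    by (simp add: field_simps)
  ultimately have "norm (L2 + L1) \<le> 18 / sqrt \<bar>\<eta>\<bar> * (A + B) * (A' + B')"
    using norm_triangle_ineq[of L2 L1] bound1 bound2 by linarith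
  with lim show "\<exists>L. (Ktrunc f g \<eta> \<longlongrightarrow> L) at_top \<and> norm L \<le> 18 / sqrt \<bar>\<eta>\<bar> * (A + B) * (A' + B')"
    by blast
qed

end
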